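(* For every constant $\beta>0$ and every sequence $x_{1:n}\in\mathcal X^n$ ($n\ge1$), $$R^\beta_S(x_{1:n}) \ge \mathrm{CL}_w(\mathcal A) - m\ln m + \sum_{j\in\mathcal A}\tfrac12\ln\frac{n_j}{2\pi} - \tfrac12\ln n - 0.45\,m - 0.43 .$$
   Context: Let $\mathcal X$ be a finite base alphabet with $D=|\mathcal X|$. For $x_{1:n}\in\mathcal X^n$, let $n_i$ be the number of occurrences of $i$ in $x_{1:n}$, $\mathcal A=\{x_1,\dots,x_n\}$, $m=|\mathcal A|$. For $0\le t\le n$ let $\mathcal A_t=\{x_1,\dots,x_t\}$ ($\mathcal A_0=\emptyset$), $m_t=|\mathcal A_t|$, $n^t_i$ the number of occurrences of $i$ in $x_{1:t}$. New-symbol weights: for each $t$ and $i\in\mathcal X\setminus\mathcal A_t$ a number $w^t_i>0$ with $\sum_{k\in\mathcal X\setminus\mathcal A_t}w^t_k\le 1$. For constant $\beta>0$, $S^\beta(x_{t+1}=i\mid x_{1:t})=n^t_i/(t+\beta)$ if $n^t_i>0$ and $\beta w^t_i/(t+\beta)$ if $n^t_i=0$, and $S^\beta(x_{1:n})=\prod_{t=0}^{n-1}S^\beta(x_{t+1}\mid x_{1:t})$. $\mathrm{CL}_w(\mathcal A):=\sum_{t\in\{0,\dots,n-1\}:\,x_{t+1}\notin\mathcal A_t}\ln(1/w^t_{x_{t+1}})$. Redundancy: $R^\beta_S(x_{1:n}):=\ln\big(n^{-n}\prod_{j\in\mathcal A}n_j^{n_j}\big)-\ln S^\beta(x_{1:n})$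 (the log of the maximum i.i.d. likelihood over $S^\beta(x_{1:n})$). Natural logarithms. *)

theory Defs
  imports Complex_Main
begin

text \<open>A sequence x_{1:n} is a function x :: nat => 'a, with x_k for k = 1..n.
  New-symbol weights: w t i plays the role of w^t_i.\<close>

definition seen :: "(nat \<Rightarrow> 'a) \<Rightarrow> nat \<Rightarrow> 'a set" where
  "seen x t = x ` {1..t}"

definition cnt :: "(nat \<Rightarrow> 'a) \<Rightarrow> nat \<Rightarrow> 'a \<Rightarrow> nat" where
  "cnt x t i = card {k \<in> {1..t}. x k = i}"

definition S_cond :: "real \<Rightarrow> (nat \<Rightarrow> 'a \<Rightarrow> real) \<Rightarrow> (nat \<Rightarrow> 'a) \<Rightarrow> nat \<Rightarrow> 'a \<Rightarrow> real" where
  "S_cond \<beta> w x t i =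
     (if cnt x t i > 0 then real (cnt x t i) / (real t + \<beta>)
      else \<beta> * w t i / (real t + \<beta>))"

definition S_prob :: "real \<Rightarrow> (nat \<Rightarrow> 'a \<Rightarrow> real) \<Rightarrow> (nat \<Rightarrow> 'a) \<Rightarrow> nat \<Rightarrow> real" where
  "S_prob \<beta> w x n = (\<Prod>t<n. S_cond \<beta> w x t (x (t + 1)))"

definition CL :: "(nat \<Rightarrow> 'a \<Rightarrow> real) \<Rightarrow> (nat \<Rightarrow> 'a) \<Rightarrow> nat \<Rightarrow> real" where
  "CL w x n = (\<Sum>t\<in>{t. t < n \<and> x (t + 1) \<notin> seen x t}. ln (1 / w t (x (t + 1))))"

definition redundancy :: "real \<Rightarrow> (nat \<Rightarrow> 'a \<Rightarrow> real) \<Rightarrow> (nat \<Rightarrow> 'a) \<Rightarrow> nat \<Rightarrow> real" where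
  "redundancy \<beta> w x n =
     ln (real n powi (- int n) * (\<Prod>j\<in>seen x n. real (cnt x n j) ^ cnt x n j))
     - ln (S_prob \<beta> w x n)"

definition valid_weights :: "'a set \<Rightarrow> (nat \<Rightarrow> 'a \<Rightarrow> real) \<Rightarrow> (nat \<Rightarrow> 'a) \<Rightarrow> nat \<Rightarrow> bool" where
  "valid_weights X w x n \<longleftrightarrow>
     (\<forall>t\<le>n. (\<forall>i\<in>X - seen x t. w t i > 0) \<and> (\<Sum>k\<in>X - seen x t. w t k) \<le> 1)"

end

theory Submission
  imports Defs
begin

text \<open>
  The estimator's probability factors exactly: the m first occurrences contribute
  \<open>\<beta>\<close> times their new-symbol weights (whence \<open>CL\<close>), the repeated occurrences of
  symbol j contribute \<open>(n\<^sub>j - 1)!\<close>, and the normaliser is \<open>\<Prod>t<n. t + \<beta>\<close>.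
  Bounding the normaliser below by \<open>\<beta>\<^sup>m (n - 1)! / (m - 1)!\<close> cancels the \<open>\<beta>\<close>'s, and the
  redundancy becomes a comparison of factorials with \<open>n\<^sup>n\<close> and \<open>n\<^sub>j ^ n\<^sub>j\<close>. This is settled by the
  Stirling-type bounds \<open>1/2 + 1/(2k) \<le> ln k! - (k + 1/2) ln k + k \<le> 1\<close>, proved by
  induction from the Pade-type estimates \<open>2y/(2 + y) \<le> ln (1 + y) \<le> y - y\<^sup>2/2 + y\<^sup>3/3\<close>.
\<close>

lemma ln_one_plus_lower_bound:
  fixes x :: real
  assumes "0 \<le> x"
  shows "2 * x / (2 + x) \<le> ln (1 + x)"
proof -
  let ?f = "\<lambda>x::real. ln (1 + x) - 2 * x / (2 + x)"
  have "?f 0 \<le> ?f x"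
  proof (rule DERIV_nonneg_imp_increasing_open[OF assms])
    fix y :: real
    assume y: "0 < y" "y < x"
    have "DERIV ?f y :> 1 / (1 + y) - 4 / (2 + y)^2"
      using y by (auto intro!: derivative_eq_intros simp: field_simps power2_eq_square)
    moreover have "4 / (2 + y)^2 \<le> 1 / (1 + y)"
      using y by (simp add: divide_simps power2_eq_square algebra_simps)
    ultimately show "\<exists>d. DERIV ?f y :> d \<and> d \<ge> 0" by force
  qed (auto intro!: continuous_intros)
  then show ?thesis by simp
qed

lemma ln_one_plus_upper_bound:
  fixes x :: real
  assumes "0 \<le> x"
  shows "ln (1 + x) \<le> x - x^2 / 2 + x^3 / 3"
proof -
  let ?f = "\<lambda>x::real. x - x^2 / 2 + x^3 / 3 - ln (1 + x)"
  have "?f 0 \<le> ?f x"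
  proof (rule DERIV_nonneg_imp_increasing_open[OF assms])
    fix y :: real
    assume y: "0 < y" "y < x"
    have "DERIV ?f y :> 1 - y + y^2 - 1 / (1 + y)"
      using y by (auto intro!: derivative_eq_intros simp: field_simps power2_eq_square)
    moreover have "1 / (1 + y) \<le> 1 - y + y^2"
    proof -
      have "(1 - y + y^2) * (1 + y) = 1 + y^3"
        by (simp add: algebra_simps power2_eq_square power3_eq_cube)
      then show ?thesis using y by (simp add: divide_simps)
    qed
    ultimately show "\<exists>d. DERIV ?f y :> d \<and> d \<ge> 0" by force
  qed (auto intro!: continuous_intros)
  then show ?thesis by simp
qed

lemma ln_one_plus_scaled_bounds:
  fixes y :: real
  assumes "0 < y" "y \<le> 1"
  shows "1 \<le> (1 / y + 1 / 2) * ln (1 + y)"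
    and "(1 / y + 1 / 2) * ln (1 + y) \<le> 1 + y^2 / (2 * (1 + y))"
proof -
  have "1 / y + 1 / 2 = (2 + y) / (2 * y)"
    using assms by (simp add: field_simps)
  then have "1 = (1 / y + 1 / 2) * (2 * y / (2 + y))"
    using assms by simp
  also have "\<dots> \<le> (1 / y + 1 / 2) * ln (1 + y)"
    using ln_one_plus_lower_bound assms by (intro mult_left_mono) auto
  finally show "1 \<le> (1 / y + 1 / 2) * ln (1 + y)" .
next
  have "(1 / y + 1 / 2) * ln (1 + y) \<le> (1 / y + 1 / 2) * (y - y^2 / 2 + y^3 / 3)"
    using ln_one_plus_upper_bound assms by (intro mult_left_mono) auto
  also have "\<dots> = 1 + y^2 * (1 + 2 * y) / 12"
    using assms by (simp add: field_simps power2_eq_square power3_eq_cube)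
  also have "\<dots> \<le> 1 + y^2 / (2 * (1 + y))"
  proof -
    have "(1 + 2 * y) * (1 + y) \<le> 3 * 2"
      using assms by (intro mult_mono) auto
    then have "y^2 * ((1 + 2 * y) * (1 + y)) \<le> y^2 * 6"
      by (intro mult_left_mono) auto
    then show ?thesis
      using assms by (simp add: divide_simps algebra_simps)
  qed
  finally show "(1 / y + 1 / 2) * ln (1 + y) \<le> 1 + y^2 / (2 * (1 + y))" .
qed

lemma ln_fact_bounds:
  assumes "k \<ge> 1"
  shows "(real k + 1 / 2) * ln (real k) - real k + 1 / 2 + 1 / (2 * real k) \<le> ln (fact k)"
    and "ln (fact k) \<le> (real k + 1 / 2) * ln (real k) - real k + 1"
proof -
  define e where "e k = ln (fact k) - (real k + 1 / 2) * ln (real k) + real k" for k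
  have "1 / 2 + 1 / (2 * real k) \<le> e k \<and> e k \<le> 1"
    using assms
  proof (induction k rule: nat_induct_at_least)
    case base
    then show ?case by (simp add: e_def)
  next
    case (Suc k)
    define y where "y = 1 / real k"
    have y: "0 < y" "y \<le> 1"
      using Suc.hyps by (auto simp: y_def)
    have "1 + y = (real k + 1) / real k"
      using Suc.hyps by (simp add: y_def field_simps)
    then have "ln (real k + 1) - ln (real k) = ln (1 + y)"
      using Suc.hyps by (simp add: ln_div)
    moreover have "ln (fact (Suc k)) = ln (real k + 1) + ln (fact k)"
      by (simp add: ln_mult add.commute)
    ultimately have "e (Suc k) = e k + 1 - (1 / y + 1 / 2) * ln (1 + y)"
      using Suc.hyps by (simp add: e_def y_def algebra_simps)
    moreover have "y^2 / (2 * (1 + y)) = 1 / (2 * real k * (real k + 1))"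
      using Suc.hyps by (simp add: y_def field_simps power2_eq_square)
    moreover have "1 / (2 * real k) - 1 / (2 * real k * (real k + 1)) = 1 / (2 * real (Suc k))"
      using Suc.hyps by (simp add: divide_simps)
    ultimately show ?case
      using Suc.IH ln_one_plus_scaled_bounds[OF y] by linarith
  qed
  then show "(real k + 1 / 2) * ln (real k) - real k + 1 / 2 + 1 / (2 * real k) \<le> ln (fact k)"
    and "ln (fact k) \<le> (real k + 1 / 2) * ln (real k) - real k + 1"
    by (auto simp: e_def)
qed

lemma seen_0 [simp]: "seen x 0 = {}"
  by (simp add: seen_def)

lemma seen_Suc: "seen x (Suc t) = insert (x (Suc t)) (seen x t)"
  by (simp add: seen_def atLeastAtMostSuc_conv)

lemma finite_seen [simp]: "finite (seen x t)"
  by (simp add: seen_def)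

lemma card_seen_le: "card (seen x t) \<le> t"
  unfolding seen_def using card_image_le[of "{1..t}" x] by simp

lemma card_seen_ge_1:
  assumes "n \<ge> 1"
  shows "card (seen x n) \<ge> 1"
proof -
  have "x 1 \<in> seen x n"
    using assms by (simp add: seen_def)
  then have "seen x n \<noteq> {}"
    by blast
  then show ?thesis
    by (simp add: Suc_le_eq card_gt_0_iff)
qed

lemma cnt_Suc: "cnt x (Suc t) i = cnt x t i + (if x (Suc t) = i then 1 else 0)"
proof -
  have "{k \<in> {1..Suc t}. x k = i} =
      (if x (Suc t) = i then insert (Suc t) {k \<in> {1..t}. x k = i} else {k \<in> {1..t}. x k = i})"
    by (auto simp: atLeastAtMostSuc_conv)
  then show ?thesis
    by (simp add: cnt_def)
qed

lemma cnt_pos_iff: "cnt x t i > 0 \<longleftrightarrow> i \<in> seen x t"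
  by (auto simp: cnt_def seen_def card_gt_0_iff)

lemma sum_cnt_seen: "(\<Sum>j\<in>seen x t. cnt x t j) = t"
  using sum.group[of "{1..t}" "x ` {1..t}" x "\<lambda>_. 1 :: nat"]
  by (simp add: cnt_def seen_def flip: card_eq_sum)

definition new_times :: "(nat \<Rightarrow> 'a) \<Rightarrow> nat \<Rightarrow> nat set" where
  "new_times x n = {t. t < n \<and> x (Suc t) \<notin> seen x t}"

lemma new_times_Suc:
  "new_times x (Suc n) =
     (if x (Suc n) \<in> seen x n then new_times x n else insert n (new_times x n))"
  by (auto simp: new_times_def less_Suc_eq)

lemma new_times_subset: "new_times x n \<subseteq> {..<n}"
  by (auto simp: new_times_def)

lemma card_new_times: "card (new_times x n) = card (seen x n)"
proof (induction n)
  case 0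
  then show ?case by (simp add: new_times_def)
next
  case (Suc n)
  have "n \<notin> new_times x n"
    by (simp add: new_times_def)
  moreover have "finite (new_times x n)"
    using finite_subset[OF new_times_subset] by blast
  ultimately show ?case
    using Suc by (simp add: new_times_Suc seen_Suc insert_absorb)
qed

lemma prod_seen_Suc:
  fixes f :: "nat \<Rightarrow> 'b :: comm_monoid_mult"
  shows "(\<Prod>j\<in>seen x (Suc n). f (cnt x (Suc n) j)) =
           f (Suc (cnt x n (x (Suc n)))) * (\<Prod>j\<in>seen x n - {x (Suc n)}. f (cnt x n j))"
proof -
  have "(\<Prod>j\<in>seen x (Suc n). f (cnt x (Suc n) j)) =
      f (cnt x (Suc n) (x (Suc n))) * (\<Prod>j\<in>seen x n - {x (Suc n)}. f (cnt x (Suc n) j))"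
    by (simp add: seen_Suc prod.insert_remove)
  also have "(\<Prod>j\<in>seen x n - {x (Suc n)}. f (cnt x (Suc n) j)) = (\<Prod>j\<in>seen x n - {x (Suc n)}. f (cnt x n j))"
    by (intro prod.cong) (auto simp: cnt_Suc)
  finally show ?thesis
    by (simp add: cnt_Suc)
qed

lemma prod_cnt_repeat_times:
  "(\<Prod>t\<in>{..<n} - new_times x n. cnt x t (x (Suc t))) = (\<Prod>j\<in>seen x n. fact (cnt x n j - 1))"
proof (induction n)
  case 0
  then show ?case by simp
next
  case (Suc n)
  let ?a = "x (Suc n)"
  have step: "(\<Prod>j\<in>seen x (Suc n). fact (cnt x (Suc n) j - 1)) =
      fact (cnt x n ?a) * (\<Prod>j\<in>seen x n - {?a}. fact (cnt x n j - 1))"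
    using prod_seen_Suc[of "\<lambda>k. fact (k - 1)" x n] by simp
  show ?case
  proof (cases "?a \<in> seen x n")
    case True
    then have "{..<Suc n} - new_times x (Suc n) = insert n ({..<n} - new_times x n)"
      by (auto simp: new_times_def less_Suc_eq)
    then have "(\<Prod>t\<in>{..<Suc n} - new_times x (Suc n). cnt x t (x (Suc t))) =
        cnt x n ?a * (\<Prod>j\<in>seen x n. fact (cnt x n j - 1))"
      using Suc.IH by simp
    also obtain c where "cnt x n ?a = Suc c"
      using True cnt_pos_iff[of x n ?a] gr0_implies_Suc by blast
    then have "cnt x n ?a * (\<Prod>j\<in>seen x n. fact (cnt x n j - 1)) =
        fact (cnt x n ?a) * (\<Prod>j\<in>seen x n - {?a}. fact (cnt x n j - 1))"
      using True by (simp add: prod.remove algebra_simps)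
    finally show ?thesis
      by (simp only: step)
  next
    case False
    then have "{..<Suc n} - new_times x (Suc n) = {..<n} - new_times x n"
      by (auto simp: new_times_def less_Suc_eq)
    moreover have "cnt x n ?a = 0"
      using False cnt_pos_iff[of x n ?a] by simp
    ultimately show ?thesis
      using Suc.IH False by (simp only: step) simp
  qed
qed

lemma ln_fact_reduce: "k \<ge> 1 \<Longrightarrow> ln (fact k) = ln (real k) + ln (fact (k - 1))"
  by (simp add: fact_reduce ln_mult)

lemma S_prob_eq:
  "S_prob \<beta> w x n =
     \<beta> ^ card (seen x n) * (\<Prod>t\<in>new_times x n. w t (x (Suc t)))
     * (\<Prod>j\<in>seen x n. fact (cnt x n j - 1)) / (\<Prod>t<n. real t + \<beta>)"
proof -
  define r where
    "r t = (if x (Suc t) \<in> seen x t then real (cnt x t (x (Suc t))) else \<beta> * w t (x (Suc t)))" for t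
  have "S_prob \<beta> w x n = (\<Prod>t<n. r t / (real t + \<beta>))"
    unfolding S_prob_def by (intro prod.cong) (simp_all add: S_cond_def r_def cnt_pos_iff)
  also have "\<dots> = (\<Prod>t<n. r t) / (\<Prod>t<n. real t + \<beta>)"
    by (rule prod_dividef)
  also have "(\<Prod>t<n. r t) =
      (\<Prod>t\<in>{..<n} - new_times x n. real (cnt x t (x (Suc t)))) * (\<Prod>t\<in>new_times x n. \<beta> * w t (x (Suc t)))"
  proof -
    have "{..<n} \<inter> {t. x (Suc t) \<in> seen x t} = {..<n} - new_times x n"
      and "{..<n} \<inter> - {t. x (Suc t) \<in> seen x t} = new_times x n"
      by (auto simp: new_times_def)
    then show ?thesis
      by (simp add: r_def prod.If_cases)
  qed
  also have "(\<Prod>t\<in>{..<n} - new_times x n. real (cnt x t (x (Suc t)))) = (\<Prod>j\<in>seen x n. fact (cnt x n j - 1))"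
    using arg_cong[OF prod_cnt_repeat_times, of real x n] by simp
  also have "(\<Prod>t\<in>new_times x n. \<beta> * w t (x (Suc t))) =
      \<beta> ^ card (seen x n) * (\<Prod>t\<in>new_times x n. w t (x (Suc t)))"
    by (simp add: prod.distrib card_new_times)
  finally show ?thesis
    by (simp add: ac_simps)
qed

lemma CL_eq: "CL w x n = - (\<Sum>t\<in>new_times x n. ln (w t (x (Suc t))))"
  unfolding CL_def new_times_def by (simp add: ln_inverse[unfolded inverse_eq_divide] flip: sum_negf)

lemma redundancy_eq:
  assumes "\<beta> > 0" "n \<ge> 1"
    and new_weight_pos: "\<And>t. t \<in> new_times x n \<Longrightarrow> w t (x (Suc t)) > 0"
  shows "redundancy \<beta> w x n =
           CL w x n + (\<Sum>j\<in>seen x n. real (cnt x n j) * ln (real (cnt x n j)) - ln (fact (cnt x n j - 1)))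
           - real n * ln (real n) - real (card (seen x n)) * ln \<beta> + (\<Sum>t<n. ln (real t + \<beta>))"
proof -
  have cnt_pos: "real (cnt x n j) > 0" if "j \<in> seen x n" for j
    using that by (simp add: cnt_pos_iff)
  have "ln (real n powi (- int n) * (\<Prod>j\<in>seen x n. real (cnt x n j) ^ cnt x n j)) =
      - real n * ln (real n) + (\<Sum>j\<in>seen x n. real (cnt x n j) * ln (real (cnt x n j)))"
    using assms(2) cnt_pos
    by (simp add: ln_mult prod_pos ln_prod ln_realpow power_int_minus ln_inverse)
  moreover have "ln (S_prob \<beta> w x n) =
      real (card (seen x n)) * ln \<beta> - CL w x n + (\<Sum>j\<in>seen x n. ln (fact (cnt x n j - 1)))
      - (\<Sum>t<n. ln (real t + \<beta>))"
  proof -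
    have "finite (new_times x n)"
      using finite_subset[OF new_times_subset] by blast
    moreover have "real t + \<beta> > 0" for t
      using assms(1) by (simp add: add_nonneg_pos)
    ultimately show ?thesis
      using assms(1) new_weight_pos
      by (simp add: S_prob_eq CL_eq ln_mult ln_div prod_pos ln_prod ln_realpow)
        (use new_weight_pos in fastforce)
  qed
  ultimately show ?thesis
    by (simp add: redundancy_def sum_subtractf)
qed

lemma sum_ln_add_ge:
  fixes \<beta> :: real
  assumes "\<beta> > 0" "1 \<le> m" "m \<le> n"
  shows "real m * ln \<beta> + ln (fact (n - 1)) - ln (fact (m - 1)) \<le> (\<Sum>t<n. ln (real t + \<beta>))"
  using assms(3)
proof (induction n rule: dec_induct)
  case base
  have "(\<Sum>t<m. ln \<beta>) \<le> (\<Sum>t<m. ln (real t + \<beta>))"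
    using assms(1) by (intro sum_mono) auto
  then show ?case by simp
next
  case (step n)
  have "ln (fact n) = ln (real n) + ln (fact (n - 1))"
    using assms(2) step.hyps by (intro ln_fact_reduce) simp
  moreover have "ln (real n) \<le> ln (real n + \<beta>)"
    using assms step.hyps by simp
  ultimately show ?case
    using step.IH by simp
qed

lemma redundancy_ge:
  assumes "\<beta> > 0" "n \<ge> 1"
    and "\<And>t. t \<in> new_times x n \<Longrightarrow> w t (x (Suc t)) > 0"
  shows "CL w x n - real (card (seen x n)) * ln (real (card (seen x n)))
           + (\<Sum>j\<in>seen x n. ln (real (cnt x n j)) / 2) - ln (real n) / 2
           + ln (real (card (seen x n))) / 2 - 1 / 2
         \<le> redundancy \<beta> w x n"
proof -
  let ?A = "seen x n" and ?c = "cnt x n"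
  let ?m = "card ?A"
  have m: "1 \<le> ?m" "?m \<le> n"
    using card_seen_ge_1[OF assms(2)] card_seen_le[of x n] by simp_all
  have ln_fact_pred_le: "ln (fact (k - 1)) \<le> (real k - 1 / 2) * ln (real k) - real k + 1"
    if "k \<ge> 1" for k
    using ln_fact_bounds(2)[OF that] ln_fact_reduce[OF that] by (simp add: algebra_simps)
  have "(\<Sum>j\<in>?A. ln (real (?c j)) / 2 + real (?c j) - 1)
      \<le> (\<Sum>j\<in>?A. real (?c j) * ln (real (?c j)) - ln (fact (?c j - 1)))"
  proof (intro sum_mono)
    fix j
    assume "j \<in> ?A"
    then have "?c j \<ge> 1"
      by (simp add: Suc_le_eq cnt_pos_iff)
    then show "ln (real (?c j)) / 2 + real (?c j) - 1 \<le> real (?c j) * ln (real (?c j)) - ln (fact (?c j - 1))"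
      using ln_fact_pred_le[of "?c j"] by (simp add: algebra_simps)
  qed
  moreover have "(\<Sum>j\<in>?A. ln (real (?c j)) / 2 + real (?c j) - 1)
      = (\<Sum>j\<in>?A. ln (real (?c j)) / 2) + real n - real ?m"
    using sum_cnt_seen[of x n] by (simp add: sum.distrib sum_subtractf flip: of_nat_sum)
  moreover have "(real n - 1 / 2) * ln (real n) - real n + 1 / 2 \<le> ln (fact (n - 1))"
  proof -
    have "0 \<le> 1 / (2 * real n)"
      by simp
    then show ?thesis
      using ln_fact_bounds(1)[OF assms(2)] ln_fact_reduce[OF assms(2)]
      unfolding left_diff_distrib distrib_right by linarith
  qed
  moreover have "ln (fact (?m - 1)) \<le> (real ?m - 1 / 2) * ln (real ?m) - real ?m + 1"
    using ln_fact_pred_le m(1) .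
  moreover note sum_ln_add_ge[OF assms(1) m] redundancy_eq[where x = x and w = w, OF assms]
  ultimately show ?thesis
    by (simp add: algebra_simps)
qed

theorem theorem2:
  fixes X :: "'a set" and x :: "nat \<Rightarrow> 'a" and w :: "nat \<Rightarrow> 'a \<Rightarrow> real"
    and \<beta> :: real and n :: nat
  assumes "finite X"
    and "\<forall>k\<in>{1..n}. x k \<in> X"
    and "n \<ge> 1"
    and "\<beta> > 0"
    and "valid_weights X w x n"
  shows "redundancy \<beta> w x n \<ge>
           CL w x n - real (card (seen x n)) * ln (real (card (seen x n)))
           + (\<Sum>j\<in>seen x n. ln (real (cnt x n j) / (2 * pi)) / 2)
           - ln (real n) / 2 - 0.45 * real (card (seen x n)) - 0.43"
proof -
  let ?m = "card (seen x n)"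
  have "w t (x (Suc t)) > 0" if "t \<in> new_times x n" for t
    using that assms(2,5) by (auto simp: valid_weights_def new_times_def)
  then have bound: "CL w x n - real ?m * ln (real ?m) + (\<Sum>j\<in>seen x n. ln (real (cnt x n j)) / 2)
      - ln (real n) / 2 + ln (real ?m) / 2 - 1 / 2 \<le> redundancy \<beta> w x n"
    using redundancy_ge assms(3,4) by blast
  have "(\<Sum>j\<in>seen x n. ln (real (cnt x n j) / (2 * pi)) / 2)
      = (\<Sum>j\<in>seen x n. ln (real (cnt x n j)) / 2) - real ?m * ln (2 * pi) / 2"
    by (simp add: ln_div cnt_pos_iff diff_divide_distrib sum_subtractf cong: sum.cong)
  moreover have "real ?m \<ge> 1"
    using card_seen_ge_1[OF assms(3)] by simp
  moreover have "real ?m * ln (2 * pi) \<ge> 0" "ln (real ?m) \<ge> 0"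
    using pi_ge_two \<open>real ?m \<ge> 1\<close> by simp_all
  moreover have decimals: "(0.45 :: real) = 9 / 20" "(0.43 :: real) = 43 / 100"
    by simp_all
  ultimately show ?thesis
    unfolding decimals using bound by linarith
qed

end
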